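(* Let $n\ge1$, $\sigma_1,\dots,\sigma_n\in G$, and $f=\sum_{\alpha\in W_n}a_\alpha\,\alpha(x_{1,\sigma_1}\cdots x_{n,\sigma_n})$ with $a_\alpha\in\mathbb{Q}$. Partition the monomials $\alpha(x_{1,\sigma_1}\cdots x_{n,\sigma_n})$ into equivalence classes and write $f=f_1+\cdots+f_t$, where each $f_i$ is the sum of the terms of $f$ whose monomials lie in one equivalence class. Then $f$ is a graded $*$-identity of $M_k(\mathbb{C})$ if and only if each $f_i$ is a graded $*$-identity, and a given $f_i$ is a graded $*$-identity if and only if the sum of its coefficients is zero.
   Context: Let $G=\{g_1=e,\dots,g_k\}$ be a finite group of order $k$. Index rows/columns of $k\times k$ matrices by $G$, let $E_{a,b}$ be matrix units, $P_g=\sum_{h\in G}E_{h,hg}$, and give $M_k(\mathbb{C})$ the $G$-crossed-product grading $M_k(\mathbb{C})_g=\{DP_g: D\text{ diagonal}\}$, with involution $*$ = transpose. $F=\mathbb{Q}\{x_{i,g},x^*_{i,g}: i\ge1,g\in G\}$ is the free algebra with involution $*$ exchanging $x_{i,g}\leftrightarrow x^*_{i,g}$ (anti-automorphism). A graded $*$-identity is an $f\in F$ vanishing under every substitution $x_{i,g}\mapsto A_{i,g}\in M_k(\mathbb{C})_g$, $x^*_{i,g}\mapsto A_{i,g}^T$. $W_n=S_n\times\{\pm1\}^n$ acts on monomials: for $\alpha=(\pi,\gamma)$ and $m=x_{i_1,\sigma_{i_1}}^{\epsilon_{i_1}}\cdots x_{i_n,\sigma_{i_n}}^{\epsilon_{i_n}}$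 ($\{i_1,\dots,i_n\}=\{1,\dots,n\}$, $\epsilon_j\in\{\text{nothing},*\}$), $\alpha(m)=x_{\pi(i_1),\sigma_{\pi(i_1)}}^{\delta_{\pi(i_1)}}\cdots x_{\pi(i_n),\sigma_{\pi(i_n)}}^{\delta_{\pi(i_n)}}$ with $\delta_j=\epsilon_j$ if $\gamma_j=1$ and $\delta_j$ the opposite choice if $\gamma_j=-1$. A strongly multilinear monomial of degree $n$ is $m=x_{j_1,h_1}^{\epsilon_1}\cdots x_{j_n,h_n}^{\epsilon_n}$ with $(j_1,\dots,j_n)$ a permutation of $(1,\dots,n)$, $h_r\in G$, $\epsilon_r\in\{\text{nothing},*\}$. Put $\tau_r=h_r$ if $\epsilon_r$ is nothing and $\tau_r=h_r^{-1}$ if $\epsilon_r=*$. The weight of $m$ is $w(m)=\tau_1\tau_2\cdots\tau_n$. For the variable index $i=j_r$, its start vertex is $s_m(i)=\tau_1\cdots\tau_{r-1}$ if $\epsilon_r$ is nothing and $s_m(i)=\tau_1\cdots\tau_{r-1}h_r^{-1}$ if $\epsilon_r=*$. An element $\alpha\in W_n$ is a path transformation of $m$ if (1) $w(\alpha(m))=w(m)$ and (2) $s_{\alpha(m)}(i)=s_m(i)$ for every $i\in\{1,\dots,n\}$. Two strongly multilinear monomials $m,r$ are equivalent if $r=\alpha(m)$ for some path transformation $\alpha$ of $m$ (this is an equivalence relation). *)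

theory Defs
  imports "HOL-Algebra.Group" "HOL-Combinatorics.Permutations" Complex_Main
begin

text \<open>Monomials in the free algebra with involution: a letter (i, g, s) is
  x_{i,g} if s = False and x^*_{i,g} if s = True.\<close>
type_synonym 'a letter = "nat \<times> 'a \<times> bool"
type_synonym 'a monomial = "'a letter list"

text \<open>Rational polynomials: coefficient functions on monomials (finite support).\<close>
type_synonym 'a fpoly = "'a monomial \<Rightarrow> rat"

text \<open>k x k complex matrices with rows/columns indexed by the group G.\<close>
type_synonym 'a gmat = "'a \<Rightarrow> 'a \<Rightarrow> complex"

definition gmul :: "('a, 'b) monoid_scheme \<Rightarrow> 'a gmat \<Rightarrow> 'a gmat \<Rightarrow> 'a gmat" where
  "gmul G A B = (\<lambda>a c. \<Sum>b\<in>carrier G. A a b * B b c)"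

definition gone :: "'a gmat" where
  "gone = (\<lambda>a b. if a = b then 1 else 0)"

definition gtransp :: "'a gmat \<Rightarrow> 'a gmat" where
  "gtransp A = (\<lambda>a b. A b a)"

text \<open>The matrix D P_g, D = diag(d), with P_g = sum_h E_{h,hg}.\<close>
definition diagP :: "('a, 'b) monoid_scheme \<Rightarrow> 'a \<Rightarrow> ('a \<Rightarrow> complex) \<Rightarrow> 'a gmat" where
  "diagP G g d = (\<lambda>a b. if a \<in> carrier G \<and> b \<in> carrier G \<and> b = a \<otimes>\<^bsub>G\<^esub> g then d a else 0)"

text \<open>The homogeneous component M_k(C)_g of the crossed-product grading.\<close>
definition graded_comp :: "('a, 'b) monoid_scheme \<Rightarrow> 'a \<Rightarrow> 'a gmat set" where
  "graded_comp G g = {A. \<exists>d. A = diagP G g d}"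

definition letter_mat :: "(nat \<Rightarrow> 'a \<Rightarrow> 'a gmat) \<Rightarrow> 'a letter \<Rightarrow> 'a gmat" where
  "letter_mat \<phi> l = (case l of (i, g, s) \<Rightarrow> if s then gtransp (\<phi> i g) else \<phi> i g)"

definition eval_mon :: "('a, 'b) monoid_scheme \<Rightarrow> (nat \<Rightarrow> 'a \<Rightarrow> 'a gmat) \<Rightarrow> 'a monomial \<Rightarrow> 'a gmat" where
  "eval_mon G \<phi> m = foldr (gmul G) (map (letter_mat \<phi>) m) gone"

definition graded_star_identity :: "('a, 'b) monoid_scheme \<Rightarrow> 'a fpoly \<Rightarrow> bool" where
  "graded_star_identity G P \<longleftrightarrow>
     (\<forall>\<phi>. (\<forall>i g. g \<in> carrier G \<longrightarrow> \<phi> i g \<in> graded_comp G g) \<longrightarrow>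
        (\<forall>a\<in>carrier G. \<forall>b\<in>carrier G.
           (\<Sum>m\<in>{m. P m \<noteq> 0}. of_rat (P m) * eval_mon G \<phi> m a b) = (0::complex)))"

text \<open>The hyperoctahedral group W_n = S_n x {+-1}^n; gamma j = True encodes gamma_j = -1.\<close>
definition Wn :: "nat \<Rightarrow> ((nat \<Rightarrow> nat) \<times> (nat \<Rightarrow> bool)) set" where
  "Wn n = {(\<pi>, \<gamma>). \<pi> permutes {1..n} \<and> (\<forall>j. j \<notin> {1..n} \<longrightarrow> \<gamma> j = False)}"

text \<open>Action of W_n on monomials: position r of alpha(m) carries variable pi(i_r),
  with the grade of that variable in m and its star status flipped iff gamma = -1.\<close>
definition act :: "((nat \<Rightarrow> nat) \<times> (nat \<Rightarrow> bool)) \<Rightarrow> 'a monomial \<Rightarrow> 'a monomial" where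
  "act \<alpha> m = map (\<lambda>l. let j = fst \<alpha> (fst l); (h, e) = the (map_of m j)
                        in (j, h, e \<noteq> snd \<alpha> j)) m"

definition strongly_multilinear :: "('a, 'b) monoid_scheme \<Rightarrow> nat \<Rightarrow> 'a monomial \<Rightarrow> bool" where
  "strongly_multilinear G n m \<longleftrightarrow>
     length m = n \<and> distinct (map fst m) \<and> set (map fst m) = {1..n} \<and>
     (\<forall>l\<in>set m. fst (snd l) \<in> carrier G)"

definition tau :: "('a, 'b) monoid_scheme \<Rightarrow> 'a letter \<Rightarrow> 'a" where
  "tau G l = (case l of (i, h, s) \<Rightarrow> if s then inv\<^bsub>G\<^esub> h else h)"

definition gprod :: "('a, 'b) monoid_scheme \<Rightarrow> 'a list \<Rightarrow> 'a" where
  "gprod G xs = foldr (\<lambda>x y. x \<otimes>\<^bsub>G\<^esub> y) xs \<one>\<^bsub>G\<^esub>"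

definition weight :: "('a, 'b) monoid_scheme \<Rightarrow> 'a monomial \<Rightarrow> 'a" where
  "weight G m = gprod G (map (tau G) m)"

definition start_vertex :: "('a, 'b) monoid_scheme \<Rightarrow> 'a monomial \<Rightarrow> nat \<Rightarrow> 'a" where
  "start_vertex G m i =
     (let r = (THE r. r < length m \<and> fst (m ! r) = i);
          (h, s) = snd (m ! r)
      in gprod G (map (tau G) (take r m)) \<otimes>\<^bsub>G\<^esub> (if s then inv\<^bsub>G\<^esub> h else \<one>\<^bsub>G\<^esub>))"

definition path_transformation :: "('a, 'b) monoid_scheme \<Rightarrow> ((nat \<Rightarrow> nat) \<times> (nat \<Rightarrow> bool)) \<Rightarrow> 'a monomial \<Rightarrow> bool" where
  "path_transformation G \<alpha> m \<longleftrightarrow>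
     \<alpha> \<in> Wn (length m) \<and> weight G (act \<alpha> m) = weight G m \<and>
     (\<forall>i\<in>{1..length m}. start_vertex G (act \<alpha> m) i = start_vertex G m i)"

definition equivalent_mon :: "('a, 'b) monoid_scheme \<Rightarrow> 'a monomial \<Rightarrow> 'a monomial \<Rightarrow> bool" where
  "equivalent_mon G m r \<longleftrightarrow>
     strongly_multilinear G (length m) m \<and> strongly_multilinear G (length r) r \<and>
     (\<exists>\<alpha>. path_transformation G \<alpha> m \<and> r = act \<alpha> m)"

definition base_mon :: "nat \<Rightarrow> (nat \<Rightarrow> 'a) \<Rightarrow> 'a monomial" where
  "base_mon n \<sigma> = map (\<lambda>i. (i, \<sigma> i, False)) [1..<n+1]"

definition poly_f :: "nat \<Rightarrow> (nat \<Rightarrow> 'a) \<Rightarrow> ((nat \<Rightarrow> nat) \<times> (nat \<Rightarrow> bool) \<Rightarrow> rat) \<Rightarrow> 'a fpoly" where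
  "poly_f n \<sigma> a = (\<lambda>m. \<Sum>\<alpha>\<in>{\<alpha>\<in>Wn n. act \<alpha> (base_mon n \<sigma>) = m}. a \<alpha>)"

definition class_part :: "('a, 'b) monoid_scheme \<Rightarrow> 'a monomial \<Rightarrow> 'a fpoly \<Rightarrow> 'a fpoly" where
  "class_part G m0 P = (\<lambda>m. if equivalent_mon G m0 m then P m else 0)"

end

theory Submission
  imports Defs
begin

text \<open>Under a graded substitution \<open>x_{i,g} \<mapsto> diag(d_{i,g}) P_g\<close> a monomial \<open>m\<close> becomes a walk
  in the Cayley graph of \<open>G\<close>: its \<open>(a, b)\<close> entry vanishes unless \<open>b = a w(m)\<close>, and then it is the
  product of the \<open>d_{i,\<sigma>_i}\<close> evaluated at the vertices \<open>a s_m(i)\<close> where the variables are read.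
  So the value of \<open>\<alpha>(x_{1,\<sigma>_1} \<cdots> x_{n,\<sigma>_n})\<close> depends only on its weight and start vertices,
  i.e. on its equivalence class, and \<open>f\<close> evaluates to a sum over classes of the coefficient sum of
  the class times a common value. Choosing \<open>d_{i,\<sigma>_i}\<close> as the indicator of the start vertex of
  \<open>i\<close> in one monomial \<open>\<beta>\<close> and reading the entry \<open>(1, w(\<beta>))\<close> isolates the class of \<open>\<beta>\<close>.\<close>

definition start_vertex_at :: "('a, 'b) monoid_scheme \<Rightarrow> 'a monomial \<Rightarrow> nat \<Rightarrow> 'a" where
  "start_vertex_at G m r =
     gprod G (map (tau G) (take r m)) \<otimes>\<^bsub>G\<^esub>
       (if snd (snd (m ! r)) then inv\<^bsub>G\<^esub> fst (snd (m ! r)) else \<one>\<^bsub>G\<^esub>)"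

lemma start_vertex_eq_start_vertex_at:
  assumes "distinct (map fst m)" and "r < length m"
  shows "start_vertex G m (fst (m ! r)) = start_vertex_at G m r"
proof -
  have "(THE r'. r' < length m \<and> fst (m ! r') = fst (m ! r)) = r"
  proof (rule the_equality)
    fix r' assume "r' < length m \<and> fst (m ! r') = fst (m ! r)"
    then show "r' = r"
      using assms nth_eq_iff_index_eq[OF assms(1), of r' r] by simp
  qed (use assms in simp)
  then show ?thesis
    by (simp add: start_vertex_def start_vertex_at_def Let_def split: prod.splits)
qed

context group
begin

lemma gprod_closed: "set xs \<subseteq> carrier G \<Longrightarrow> gprod G xs \<in> carrier G"
  by (induction xs) (auto simp: gprod_def)

lemma tau_closed: "fst (snd l) \<in> carrier G \<Longrightarrow> tau G l \<in> carrier G"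
  by (cases l) (auto simp: tau_def)

lemma weight_closed: "\<forall>l\<in>set m. fst (snd l) \<in> carrier G \<Longrightarrow> weight G m \<in> carrier G"
  unfolding weight_def by (rule gprod_closed) (auto intro: tau_closed)

lemma start_vertex_at_closed:
  assumes "\<forall>l\<in>set m. fst (snd l) \<in> carrier G" and "r < length m"
  shows "start_vertex_at G m r \<in> carrier G"
proof -
  have "gprod G (map (tau G) (take r m)) \<in> carrier G"
    using assms(1) by (intro gprod_closed) (auto intro: tau_closed dest: in_set_takeD)
  moreover have "fst (snd (m ! r)) \<in> carrier G"
    using assms by auto
  ultimately show ?thesis
    by (simp add: start_vertex_at_def)
qed

lemma start_vertex_closed:
  assumes sm: "strongly_multilinear G n m" and i: "i \<in> {1..n}"
  shows "start_vertex G m i \<in> carrier G"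
proof -
  have "i \<in> set (map fst m)"
    using sm i by (simp add: strongly_multilinear_def)
  then obtain r where r: "r < length m" and "fst (m ! r) = i"
    by (auto simp: in_set_conv_nth)
  then have "start_vertex G m i = start_vertex_at G m r"
    using sm start_vertex_eq_start_vertex_at by (auto simp: strongly_multilinear_def)
  then show ?thesis
    using sm r start_vertex_at_closed by (simp add: strongly_multilinear_def)
qed

lemma start_vertex_at_Cons_0:
  "fst (snd l) \<in> carrier G \<Longrightarrow>
    start_vertex_at G (l # m) 0 = (if snd (snd l) then inv fst (snd l) else \<one>)"
  by (simp add: start_vertex_at_def gprod_def)

lemma start_vertex_at_Cons_Suc:
  assumes "\<forall>l\<in>set (l # m). fst (snd l) \<in> carrier G" and "r < length m"
  shows "start_vertex_at G (l # m) (Suc r) = tau G l \<otimes> start_vertex_at G m r"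
proof -
  have "gprod G (map (tau G) (take r m)) \<in> carrier G"
    using assms(1) by (intro gprod_closed) (auto intro: tau_closed dest: in_set_takeD)
  moreover have "fst (snd (m ! r)) \<in> carrier G" and "tau G l \<in> carrier G"
    using assms by (auto intro: tau_closed)
  ultimately show ?thesis
    by (simp add: start_vertex_at_def gprod_def m_assoc)
qed

lemma eval_mon_Cons:
  assumes fin: "finite (carrier G)" and h: "h \<in> carrier G" and \<phi>: "\<phi> i h = diagP G h d"
    and a: "a \<in> carrier G"
  shows "eval_mon G \<phi> ((i, h, s) # m) a b =
           d (a \<otimes> (if s then inv h else \<one>)) * eval_mon G \<phi> m (a \<otimes> tau G (i, h, s)) b"
proof -
  define x where "x = a \<otimes> tau G (i, h, s)"
  have x: "x \<in> carrier G"
    using a h by (simp add: x_def tau_def)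
  have row: "letter_mat \<phi> (i, h, s) a c = (if c = x then d (a \<otimes> (if s then inv h else \<one>)) else 0)"
    if c: "c \<in> carrier G" for c
  proof -
    have "a = c \<otimes> h \<longleftrightarrow> c = a \<otimes> inv h"
      using c a h by (metis inv_solve_right)
    then show ?thesis
      using c a h by (cases s) (auto simp: letter_mat_def gtransp_def diagP_def \<phi> x_def tau_def)
  qed
  have "eval_mon G \<phi> ((i, h, s) # m) a b = (\<Sum>c\<in>carrier G. letter_mat \<phi> (i, h, s) a c * eval_mon G \<phi> m c b)"
    by (simp add: eval_mon_def gmul_def)
  also have "\<dots> = (\<Sum>c\<in>carrier G. if c = x then d (a \<otimes> (if s then inv h else \<one>)) * eval_mon G \<phi> m c b else 0)"
    by (rule sum.cong) (simp_all add: row)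
  also have "\<dots> = d (a \<otimes> (if s then inv h else \<one>)) * eval_mon G \<phi> m x b"
    using fin x by simp
  finally show ?thesis
    by (simp add: x_def)
qed

lemma eval_mon_path:
  assumes fin: "finite (carrier G)"
    and letters: "\<forall>l\<in>set m. fst (snd l) \<in> carrier G \<and>
                    \<phi> (fst l) (fst (snd l)) = diagP G (fst (snd l)) (D (fst l) (fst (snd l)))"
    and a: "a \<in> carrier G"
  shows "eval_mon G \<phi> m a b =
           (if b = a \<otimes> weight G m
            then \<Prod>r<length m. D (fst (m ! r)) (fst (snd (m ! r))) (a \<otimes> start_vertex_at G m r)
            else 0)"
  using letters a
proof (induction m arbitrary: a)
  case Nil
  then show ?case
    by (simp add: eval_mon_def gone_def weight_def gprod_def)
next
  case (Cons l m)
  obtain i h s where l: "l = (i, h, s)"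
    by (cases l)
  have grades: "\<forall>l\<in>set (l # m). fst (snd l) \<in> carrier G"
    using Cons.prems(1) by blast
  have h: "h \<in> carrier G" and \<phi>: "\<phi> i h = diagP G h (D i h)"
    using Cons.prems(1) l by auto
  define a' where "a' = a \<otimes> tau G l"
  have a': "a' \<in> carrier G"
    using Cons.prems(2) h by (simp add: a'_def l tau_def)
  define F where "F r = D (fst ((l # m) ! r)) (fst (snd ((l # m) ! r)))
                          (a \<otimes> start_vertex_at G (l # m) r)" for r
  have F0: "F 0 = D i h (a \<otimes> (if s then inv h else \<one>))"
    using h by (simp add: F_def l start_vertex_at_Cons_0)
  have FSuc: "F (Suc r) = D (fst (m ! r)) (fst (snd (m ! r))) (a' \<otimes> start_vertex_at G m r)"
    if "r < length m" for r
    using that grades Cons.prems(2) start_vertex_at_closed[of m r] tau_closed[of l]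
    by (simp add: F_def a'_def start_vertex_at_Cons_Suc m_assoc)
  have weight: "a \<otimes> weight G (l # m) = a' \<otimes> weight G m"
    using grades Cons.prems(2) weight_closed[of m] tau_closed[of l]
    by (simp add: a'_def weight_def gprod_def m_assoc)
  have "eval_mon G \<phi> (l # m) a b = F 0 * eval_mon G \<phi> m a' b"
    unfolding l F0 a'_def by (rule eval_mon_Cons[where \<phi> = \<phi> and i = i and h = h and d = "D i h", OF fin h \<phi> Cons.prems(2)])
  also have "\<dots> = (if b = a \<otimes> weight G (l # m) then F 0 * (\<Prod>r<length m. F (Suc r)) else 0)"
    using Cons.IH[OF _ a'] Cons.prems(1) FSuc weight by simp
  also have "\<dots> = (if b = a \<otimes> weight G (l # m) then \<Prod>r<length (l # m). F r else 0)"
    by (simp only: length_Cons prod.lessThan_Suc_shift)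
  finally show ?case
    by (simp add: F_def)
qed

lemma eval_mon_multilinear:
  assumes fin: "finite (carrier G)" and dist: "distinct (map fst m)"
    and grades: "\<forall>l\<in>set m. fst (snd l) = \<sigma> (fst l) \<and> \<sigma> (fst l) \<in> carrier G"
    and \<phi>: "\<forall>i\<in>set (map fst m). \<phi> i (\<sigma> i) = diagP G (\<sigma> i) (D i)"
    and a: "a \<in> carrier G"
  shows "eval_mon G \<phi> m a b =
           (if b = a \<otimes> weight G m then \<Prod>i\<in>set (map fst m). D i (a \<otimes> start_vertex G m i) else 0)"
proof -
  define H where "H i = D i (a \<otimes> start_vertex G m i)" for i
  have "(\<Prod>r<length m. D (fst (m ! r)) (a \<otimes> start_vertex_at G m r)) = (\<Prod>r<length m. H (map fst m ! r))"
    by (rule prod.cong) (simp_all add: H_def start_vertex_eq_start_vertex_at[OF dist])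
  also have "\<dots> = prod_list (map H (map fst m))"
    by (simp add: prod.list_conv_set_nth atLeast0LessThan)
  also have "\<dots> = prod H (set (map fst m))"
    by (rule prod.distinct_set_conv_list[symmetric, OF dist])
  finally show ?thesis
    using eval_mon_path[OF fin _ a, of m \<phi> "\<lambda>i h. D i" b] grades \<phi> by (simp add: H_def)
qed

end

definition permuted_mon :: "nat \<Rightarrow> (nat \<Rightarrow> 'a) \<Rightarrow> (nat \<Rightarrow> nat) \<Rightarrow> (nat \<Rightarrow> bool) \<Rightarrow> 'a monomial" where
  "permuted_mon n \<sigma> \<pi> \<gamma> = map (\<lambda>i. (\<pi> i, \<sigma> (\<pi> i), \<gamma> (\<pi> i))) [1..<n+1]"

lemma length_permuted_mon: "length (permuted_mon n \<sigma> \<pi> \<gamma>) = n"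
  by (simp add: permuted_mon_def)

lemma permuted_mon_grade: "l \<in> set (permuted_mon n \<sigma> \<pi> \<gamma>) \<Longrightarrow> fst (snd l) = \<sigma> (fst l)"
  by (auto simp: permuted_mon_def)

lemma variables_permuted_mon:
  "\<pi> permutes {1..n} \<Longrightarrow> set (map fst (permuted_mon n \<sigma> \<pi> \<gamma>)) = {1..n}"
  by (simp add: permuted_mon_def image_image permutes_image atLeastLessThanSuc_atLeastAtMost
      flip: image_image[of fst] del: upt_Suc)

lemma distinct_permuted_mon:
  "\<pi> permutes {1..n} \<Longrightarrow> distinct (map fst (permuted_mon n \<sigma> \<pi> \<gamma>))"
  by (simp add: permuted_mon_def o_def distinct_map permutes_inj_on)

lemma map_of_permuted_mon:
  assumes "\<pi> permutes {1..n}" and "j \<in> {1..n}"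
  shows "map_of (permuted_mon n \<sigma> \<pi> \<gamma>) j = Some (\<sigma> j, \<gamma> j)"
proof -
  have "permuted_mon n \<sigma> \<pi> \<gamma> = map (\<lambda>x. (x, \<sigma> x, \<gamma> x)) (map \<pi> [1..<n+1])"
    by (simp add: permuted_mon_def)
  then have "map_of (permuted_mon n \<sigma> \<pi> \<gamma>) = (Some \<circ> (\<lambda>x. (\<sigma> x, \<gamma> x))) |` set (map \<pi> [1..<n+1])"
    by (simp only: map_of_map_restrict)
  moreover have "set (map \<pi> [1..<n+1]) = {1..n}"
    using assms by (simp add: permutes_image atLeastLessThanSuc_atLeastAtMost del: upt_Suc)
  ultimately show ?thesis
    using assms by simp
qed

lemma act_permuted_mon:
  assumes \<pi>: "\<pi> permutes {1..n}" and \<rho>: "\<rho> permutes {1..n}"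
  shows "act (\<rho>, \<gamma>) (permuted_mon n \<sigma> \<pi> \<delta>) = permuted_mon n \<sigma> (\<rho> \<circ> \<pi>) (\<lambda>j. \<delta> j \<noteq> \<gamma> j)"
proof -
  define M where "M = permuted_mon n \<sigma> \<pi> \<delta>"
  define f where "f l = (let j = \<rho> (fst l); (h, e) = the (map_of M j) in (j, h, e \<noteq> \<gamma> j))" for l :: "'a letter"
  have M_at: "the (map_of M (\<rho> (\<pi> i))) = (\<sigma> (\<rho> (\<pi> i)), \<delta> (\<rho> (\<pi> i)))"
    if "i \<in> set [1..<n+1]" for i
  proof -
    have "i \<in> {1..n}"
      using that by auto
    then have "\<rho> (\<pi> i) \<in> {1..n}"
      by (simp only: permutes_in_image[OF \<pi>] permutes_in_image[OF \<rho>])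
    then show ?thesis
      by (simp add: M_def map_of_permuted_mon[OF \<pi>])
  qed
  have "act (\<rho>, \<gamma>) M = map f (map (\<lambda>i. (\<pi> i, \<sigma> (\<pi> i), \<delta> (\<pi> i))) [1..<n+1])"
    by (simp only: act_def f_def[abs_def] fst_conv snd_conv M_def permuted_mon_def)
  also have "\<dots> = permuted_mon n \<sigma> (\<rho> \<circ> \<pi>) (\<lambda>j. \<delta> j \<noteq> \<gamma> j)"
    by (simp add: permuted_mon_def f_def M_at Let_def cong: map_cong)
  finally show ?thesis
    by (simp only: M_def)
qed

lemma act_base_mon:
  "\<alpha> \<in> Wn n \<Longrightarrow> act \<alpha> (base_mon n \<sigma>) = permuted_mon n \<sigma> (fst \<alpha>) (snd \<alpha>)"
proof -
  have "base_mon n \<sigma> = permuted_mon n \<sigma> id (\<lambda>_. False)"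
    by (simp add: base_mon_def permuted_mon_def)
  then show "\<alpha> \<in> Wn n \<Longrightarrow> ?thesis"
    by (cases \<alpha>) (simp add: Wn_def act_permuted_mon permutes_id)
qed

lemma act_base_mon_transitive:
  assumes \<alpha>: "\<alpha> \<in> Wn n" and \<beta>: "\<beta> \<in> Wn n"
  obtains \<alpha>' where "\<alpha>' \<in> Wn n" and "act \<alpha>' (act \<beta> (base_mon n \<sigma>)) = act \<alpha> (base_mon n \<sigma>)"
proof -
  obtain \<pi> \<gamma> \<rho> \<delta> where \<alpha>_eq: "\<alpha> = (\<pi>, \<gamma>)" and \<beta>_eq: "\<beta> = (\<rho>, \<delta>)"
    by (cases \<alpha>, cases \<beta>)
  have \<pi>: "\<pi> permutes {1..n}" and \<rho>: "\<rho> permutes {1..n}"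
    using \<alpha> \<beta> \<alpha>_eq \<beta>_eq by (auto simp: Wn_def)
  have \<pi>\<rho>: "\<pi> \<circ> inv_into UNIV \<rho> permutes {1..n}"
    by (rule permutes_compose[OF permutes_inv[OF \<rho>] \<pi>])
  have "act (\<pi> \<circ> inv_into UNIV \<rho>, \<lambda>j. \<delta> j \<noteq> \<gamma> j) (act \<beta> (base_mon n \<sigma>)) =
          permuted_mon n \<sigma> (\<pi> \<circ> inv_into UNIV \<rho> \<circ> \<rho>) (\<lambda>j. \<delta> j \<noteq> (\<delta> j \<noteq> \<gamma> j))"
    using act_base_mon[OF \<beta>, of \<sigma>] \<beta>_eq by (simp only: fst_conv snd_conv act_permuted_mon[OF \<rho> \<pi>\<rho>])
  also have "\<dots> = permuted_mon n \<sigma> \<pi> \<gamma>"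
  proof -
    have "(\<lambda>j. \<delta> j \<noteq> (\<delta> j \<noteq> \<gamma> j)) = \<gamma>"
      by auto
    then show ?thesis
      by (simp add: comp_assoc permutes_inv_o(2)[OF \<rho>])
  qed
  also have "\<dots> = act \<alpha> (base_mon n \<sigma>)"
    using act_base_mon[OF \<alpha>, of \<sigma>] \<alpha>_eq by simp
  finally show thesis
    using \<alpha> \<beta> \<alpha>_eq \<beta>_eq \<pi>\<rho> by (intro that[of "(\<pi> \<circ> inv_into UNIV \<rho>, \<lambda>j. \<delta> j \<noteq> \<gamma> j)"]) (auto simp: Wn_def)
qed

lemma finite_Wn: "finite (Wn n)"
proof -
  have "Wn n \<subseteq> {\<pi>. \<pi> permutes {1..n}} \<times> (\<lambda>S j. j \<in> S) ` Pow {1..n}"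
  proof
    fix x assume x: "x \<in> Wn n"
    then have "{j. snd x j} \<subseteq> {1..n}"
      by (auto simp: Wn_def split: prod.splits)
    moreover have "snd x = (\<lambda>j. j \<in> {j. snd x j})"
      by simp
    ultimately have "snd x \<in> (\<lambda>S j. j \<in> S) ` Pow {1..n}"
      by blast
    then show "x \<in> {\<pi>. \<pi> permutes {1..n}} \<times> (\<lambda>S j. j \<in> S) ` Pow {1..n}"
      using x by (auto simp: Wn_def mem_Times_iff)
  qed
  then show ?thesis
    by (rule finite_subset) (intro finite_cartesian_product finite_permutations finite_imageI; simp)
qed

locale graded_multilinear = group G for G :: "('a, 'b) monoid_scheme" (structure) +
  fixes n :: nat and \<sigma> :: "nat \<Rightarrow> 'a"
  assumes finite_carrier: "finite (carrier G)" and \<sigma>_closed: "\<forall>i\<in>{1..n}. \<sigma> i \<in> carrier G"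
begin

abbreviation orbit_mon :: "(nat \<Rightarrow> nat) \<times> (nat \<Rightarrow> bool) \<Rightarrow> 'a monomial" where
  "orbit_mon \<alpha> \<equiv> act \<alpha> (base_mon n \<sigma>)"

definition path_key :: "(nat \<Rightarrow> nat) \<times> (nat \<Rightarrow> bool) \<Rightarrow> 'a \<times> (nat \<Rightarrow> 'a)" where
  "path_key \<alpha> = (weight G (orbit_mon \<alpha>), restrict (start_vertex G (orbit_mon \<alpha>)) {1..n})"

definition key_value :: "(nat \<Rightarrow> 'a \<Rightarrow> complex) \<Rightarrow> 'a \<times> (nat \<Rightarrow> 'a) \<Rightarrow> 'a \<Rightarrow> 'a \<Rightarrow> complex" where
  "key_value D k a b = (if b = a \<otimes> fst k then \<Prod>i\<in>{1..n}. D i (a \<otimes> snd k i) else 0)"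

definition class_sum :: "((nat \<Rightarrow> nat) \<times> (nat \<Rightarrow> bool) \<Rightarrow> rat) \<Rightarrow> (nat \<Rightarrow> nat) \<times> (nat \<Rightarrow> bool) \<Rightarrow> rat" where
  "class_sum c \<beta> = (\<Sum>\<alpha>\<in>{\<alpha>\<in>Wn n. path_key \<alpha> = path_key \<beta>}. c \<alpha>)"

lemma orbit_mon_strongly_multilinear:
  assumes "\<alpha> \<in> Wn n"
  shows "strongly_multilinear G n (orbit_mon \<alpha>)"
    and "\<forall>l\<in>set (orbit_mon \<alpha>). fst (snd l) = \<sigma> (fst l)"
proof -
  have \<pi>: "fst \<alpha> permutes {1..n}"
    using assms by (auto simp: Wn_def)
  have orbit: "orbit_mon \<alpha> = permuted_mon n \<sigma> (fst \<alpha>) (snd \<alpha>)"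
    using act_base_mon[OF assms] .
  show grades: "\<forall>l\<in>set (orbit_mon \<alpha>). fst (snd l) = \<sigma> (fst l)"
    by (simp add: orbit permuted_mon_grade)
  have vars: "set (map fst (orbit_mon \<alpha>)) = {1..n}"
    by (simp only: orbit variables_permuted_mon[OF \<pi>])
  then have "fst l \<in> {1..n}" if "l \<in> set (orbit_mon \<alpha>)" for l
    using that by auto
  then show "strongly_multilinear G n (orbit_mon \<alpha>)"
    using vars grades \<sigma>_closed distinct_permuted_mon[OF \<pi>]
    by (auto simp: strongly_multilinear_def orbit length_permuted_mon simp del: set_map)
qed

lemma eval_orbit_mon:
  assumes "\<alpha> \<in> Wn n" and \<phi>: "\<forall>i\<in>{1..n}. \<phi> i (\<sigma> i) = diagP G (\<sigma> i) (D i)"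
    and a: "a \<in> carrier G"
  shows "eval_mon G \<phi> (orbit_mon \<alpha>) a b = key_value D (path_key \<alpha>) a b"
proof -
  have sm: "strongly_multilinear G n (orbit_mon \<alpha>)"
    and grades: "\<forall>l\<in>set (orbit_mon \<alpha>). fst (snd l) = \<sigma> (fst l)"
    using orbit_mon_strongly_multilinear[OF assms(1)] by blast+
  then have "eval_mon G \<phi> (orbit_mon \<alpha>) a b =
      (if b = a \<otimes> weight G (orbit_mon \<alpha>)
       then \<Prod>i\<in>{1..n}. D i (a \<otimes> start_vertex G (orbit_mon \<alpha>) i) else 0)"
    using eval_mon_multilinear[OF finite_carrier _ _ _ a, of "orbit_mon \<alpha>" \<sigma> \<phi> D] \<phi>
    by (auto simp: strongly_multilinear_def)
  then show ?thesis
    by (simp add: key_value_def path_key_def)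
qed

lemma equivalent_orbit_mon_iff:
  assumes \<alpha>: "\<alpha> \<in> Wn n" and \<beta>: "\<beta> \<in> Wn n"
  shows "equivalent_mon G (orbit_mon \<beta>) (orbit_mon \<alpha>) \<longleftrightarrow> path_key \<alpha> = path_key \<beta>"
proof
  assume "equivalent_mon G (orbit_mon \<beta>) (orbit_mon \<alpha>)"
  then obtain \<alpha>' where "path_transformation G \<alpha>' (orbit_mon \<beta>)" and "orbit_mon \<alpha> = act \<alpha>' (orbit_mon \<beta>)"
    by (auto simp: equivalent_mon_def)
  then show "path_key \<alpha> = path_key \<beta>"
    using orbit_mon_strongly_multilinear(1)[OF \<beta>]
    by (auto simp: path_key_def path_transformation_def strongly_multilinear_def fun_eq_iff)
next
  assume key: "path_key \<alpha> = path_key \<beta>"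
  obtain \<alpha>' where \<alpha>': "\<alpha>' \<in> Wn n" and act: "act \<alpha>' (orbit_mon \<beta>) = orbit_mon \<alpha>"
    using act_base_mon_transitive[OF \<alpha> \<beta>] .
  have sm: "strongly_multilinear G (length (orbit_mon \<gamma>)) (orbit_mon \<gamma>)" if "\<gamma> \<in> Wn n" for \<gamma>
    using orbit_mon_strongly_multilinear(1)[OF that] by (simp add: strongly_multilinear_def)
  have "path_transformation G \<alpha>' (orbit_mon \<beta>)"
    using key \<alpha>' orbit_mon_strongly_multilinear(1)[OF \<beta>]
    by (auto simp: path_transformation_def act path_key_def strongly_multilinear_def fun_eq_iff
        split: if_splits)
  then show "equivalent_mon G (orbit_mon \<beta>) (orbit_mon \<alpha>)"
    unfolding equivalent_mon_def using sm \<alpha> \<beta> act[symmetric] by blast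
qed

lemma sum_poly_f:
  "(\<Sum>m\<in>{m. poly_f n \<sigma> c m \<noteq> 0}. of_rat (poly_f n \<sigma> c m) * F m) =
     (\<Sum>\<alpha>\<in>Wn n. of_rat (c \<alpha>) * (F (orbit_mon \<alpha>) :: complex))"
proof -
  have support: "{m. poly_f n \<sigma> c m \<noteq> 0} \<subseteq> orbit_mon ` Wn n"
    by (auto simp: poly_f_def intro: sum.neutral)
  have "(\<Sum>m\<in>{m. poly_f n \<sigma> c m \<noteq> 0}. of_rat (poly_f n \<sigma> c m) * F m) =
          (\<Sum>m\<in>orbit_mon ` Wn n. of_rat (poly_f n \<sigma> c m) * F m)"
    by (rule sum.mono_neutral_left[OF finite_imageI[OF finite_Wn] support]) auto
  also have "\<dots> = (\<Sum>m\<in>orbit_mon ` Wn n. \<Sum>\<alpha>\<in>{\<alpha>\<in>Wn n. orbit_mon \<alpha> = m}. of_rat (c \<alpha>) * F (orbit_mon \<alpha>))"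
    by (rule sum.cong) (auto simp: poly_f_def of_rat_sum sum_distrib_right)
  also have "\<dots> = (\<Sum>\<alpha>\<in>Wn n. of_rat (c \<alpha>) * F (orbit_mon \<alpha>))"
    by (rule sum.image_gen[symmetric, OF finite_Wn])
  finally show ?thesis .
qed

lemma graded_star_identity_poly_f_iff:
  "graded_star_identity G (poly_f n \<sigma> c) \<longleftrightarrow>
    (\<forall>D. \<forall>a\<in>carrier G. \<forall>b\<in>carrier G. (\<Sum>\<alpha>\<in>Wn n. of_rat (c \<alpha>) * key_value D (path_key \<alpha>) a b) = 0)"
proof
  assume I: "graded_star_identity G (poly_f n \<sigma> c)"
  show "\<forall>D. \<forall>a\<in>carrier G. \<forall>b\<in>carrier G. (\<Sum>\<alpha>\<in>Wn n. of_rat (c \<alpha>) * key_value D (path_key \<alpha>) a b) = 0"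
  proof (intro allI ballI)
    fix D a b assume a: "a \<in> carrier G" and b: "b \<in> carrier G"
    define \<phi> where "\<phi> i g = diagP G g (D i)" for i :: nat and g
    have "\<forall>i g. g \<in> carrier G \<longrightarrow> \<phi> i g \<in> graded_comp G g"
      by (auto simp: \<phi>_def graded_comp_def)
    then have "(\<Sum>\<alpha>\<in>Wn n. of_rat (c \<alpha>) * eval_mon G \<phi> (orbit_mon \<alpha>) a b) = 0"
      using I a b unfolding graded_star_identity_def sum_poly_f by blast
    then show "(\<Sum>\<alpha>\<in>Wn n. of_rat (c \<alpha>) * key_value D (path_key \<alpha>) a b) = 0"
      using eval_orbit_mon[OF _ _ a, of _ \<phi> D] by (simp add: \<phi>_def cong: sum.cong)
  qed
next
  assume H: "\<forall>D. \<forall>a\<in>carrier G. \<forall>b\<in>carrier G. (\<Sum>\<alpha>\<in>Wn n. of_rat (c \<alpha>) * key_value D (path_key \<alpha>) a b) = 0"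
  show "graded_star_identity G (poly_f n \<sigma> c)"
    unfolding graded_star_identity_def sum_poly_f
  proof (intro allI impI ballI)
    fix \<phi> :: "nat \<Rightarrow> 'a \<Rightarrow> 'a gmat" and a b
    assume graded: "\<forall>i g. g \<in> carrier G \<longrightarrow> \<phi> i g \<in> graded_comp G g"
      and a: "a \<in> carrier G" and b: "b \<in> carrier G"
    define D where "D i = (SOME d. \<phi> i (\<sigma> i) = diagP G (\<sigma> i) d)" for i
    have \<phi>: "\<forall>i\<in>{1..n}. \<phi> i (\<sigma> i) = diagP G (\<sigma> i) (D i)"
    proof
      fix i assume "i \<in> {1..n}"
      then have "\<exists>d. \<phi> i (\<sigma> i) = diagP G (\<sigma> i) d"
        using graded \<sigma>_closed by (auto simp: graded_comp_def)
      then show "\<phi> i (\<sigma> i) = diagP G (\<sigma> i) (D i)"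
        unfolding D_def by (rule someI_ex)
    qed
    have "(\<Sum>\<alpha>\<in>Wn n. of_rat (c \<alpha>) * eval_mon G \<phi> (orbit_mon \<alpha>) a b) =
            (\<Sum>\<alpha>\<in>Wn n. of_rat (c \<alpha>) * key_value D (path_key \<alpha>) a b)"
      by (rule sum.cong) (simp_all add: eval_orbit_mon[where \<phi> = \<phi> and D = D, OF _ \<phi> a])
    then show "(\<Sum>\<alpha>\<in>Wn n. of_rat (c \<alpha>) * eval_mon G \<phi> (orbit_mon \<alpha>) a b) = 0"
      using H a b by simp
  qed
qed

lemma key_value_separates_classes:
  assumes \<beta>: "\<beta> \<in> Wn n"
  obtains D where "\<And>\<alpha>. \<alpha> \<in> Wn n \<Longrightarrow>
    key_value D (path_key \<alpha>) \<one> (weight G (orbit_mon \<beta>)) = of_bool (path_key \<alpha> = path_key \<beta>)"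
proof -
  define D :: "nat \<Rightarrow> 'a \<Rightarrow> complex"
    where "D i x = of_bool (x = start_vertex G (orbit_mon \<beta>) i)" for i x
  have "key_value D (path_key \<alpha>) \<one> (weight G (orbit_mon \<beta>)) = of_bool (path_key \<alpha> = path_key \<beta>)"
    if \<alpha>: "\<alpha> \<in> Wn n" for \<alpha>
  proof -
    have "key_value D (path_key \<alpha>) \<one> (weight G (orbit_mon \<beta>)) =
        of_bool (weight G (orbit_mon \<beta>) = weight G (orbit_mon \<alpha>)) *
          (\<Prod>i\<in>{1..n}. of_bool (start_vertex G (orbit_mon \<alpha>) i = start_vertex G (orbit_mon \<beta>) i))"
      using weight_closed orbit_mon_strongly_multilinear(1)[OF \<alpha>]
        start_vertex_closed[OF orbit_mon_strongly_multilinear(1)[OF \<alpha>]]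
      by (auto simp: key_value_def path_key_def D_def strongly_multilinear_def intro!: prod.cong)
    also have "\<dots> = of_bool (path_key \<alpha> = path_key \<beta>)"
      by (auto simp: path_key_def restrict_def fun_eq_iff)
    finally show ?thesis .
  qed
  then show thesis
    by (rule that)
qed

lemma graded_star_identity_poly_f_iff_class_sums:
  "graded_star_identity G (poly_f n \<sigma> c) \<longleftrightarrow> (\<forall>\<beta>\<in>Wn n. class_sum c \<beta> = 0)"
  unfolding graded_star_identity_poly_f_iff
proof (intro iffI ballI allI)
  fix \<beta> assume H: "\<forall>D. \<forall>a\<in>carrier G. \<forall>b\<in>carrier G.
                      (\<Sum>\<alpha>\<in>Wn n. of_rat (c \<alpha>) * key_value D (path_key \<alpha>) a b) = 0"
    and \<beta>: "\<beta> \<in> Wn n"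
  obtain D where D: "\<And>\<alpha>. \<alpha> \<in> Wn n \<Longrightarrow>
      key_value D (path_key \<alpha>) \<one> (weight G (orbit_mon \<beta>)) = of_bool (path_key \<alpha> = path_key \<beta>)"
    using key_value_separates_classes[OF \<beta>] by blast
  have "weight G (orbit_mon \<beta>) \<in> carrier G"
    using weight_closed orbit_mon_strongly_multilinear(1)[OF \<beta>] by (simp add: strongly_multilinear_def)
  then have "0 = (\<Sum>\<alpha>\<in>Wn n. of_rat (c \<alpha>) * key_value D (path_key \<alpha>) \<one> (weight G (orbit_mon \<beta>)))"
    using H by simp
  also have "\<dots> = of_rat (class_sum c \<beta>)"
    by (simp add: D class_sum_def of_rat_sum sum.inter_filter[OF finite_Wn] of_bool_def if_distrib
        cong: sum.cong if_cong)
  finally show "class_sum c \<beta> = 0"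
    by simp
next
  fix D a b assume H: "\<forall>\<beta>\<in>Wn n. class_sum c \<beta> = 0"
  have "(\<Sum>\<alpha>\<in>Wn n. of_rat (c \<alpha>) * key_value D (path_key \<alpha>) a b) =
          (\<Sum>k\<in>path_key ` Wn n. \<Sum>\<alpha>\<in>{\<alpha>\<in>Wn n. path_key \<alpha> = k}. of_rat (c \<alpha>) * key_value D k a b)"
    by (subst sum.image_gen[OF finite_Wn]) (auto intro: sum.cong)
  also have "\<dots> = 0"
  proof (rule sum.neutral, rule ballI)
    fix k assume "k \<in> path_key ` Wn n"
    then obtain \<beta> where \<beta>: "\<beta> \<in> Wn n" and k: "k = path_key \<beta>"
      by blast
    have "(\<Sum>\<alpha>\<in>{\<alpha>\<in>Wn n. path_key \<alpha> = k}. of_rat (c \<alpha>) * key_value D k a b) =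
            of_rat (class_sum c \<beta>) * key_value D k a b"
      by (simp add: class_sum_def k of_rat_sum sum_distrib_right)
    then show "(\<Sum>\<alpha>\<in>{\<alpha>\<in>Wn n. path_key \<alpha> = k}. of_rat (c \<alpha>) * key_value D k a b) = 0"
      using H \<beta> by simp
  qed
  finally show "(\<Sum>\<alpha>\<in>Wn n. of_rat (c \<alpha>) * key_value D (path_key \<alpha>) a b) = 0" .
qed

lemma class_part_poly_f:
  assumes "\<beta> \<in> Wn n"
  shows "class_part G (orbit_mon \<beta>) (poly_f n \<sigma> c) =
           poly_f n \<sigma> (\<lambda>\<alpha>. if path_key \<alpha> = path_key \<beta> then c \<alpha> else 0)"
  using equivalent_orbit_mon_iff[OF _ assms]
  by (auto simp: fun_eq_iff class_part_def poly_f_def intro!: sum.cong sum.neutral)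

lemma class_sum_restrict:
  "class_sum (\<lambda>\<alpha>. if path_key \<alpha> = path_key \<beta> then c \<alpha> else 0) \<beta>' =
     (if path_key \<beta>' = path_key \<beta> then class_sum c \<beta> else 0)"
  by (auto simp: class_sum_def intro: sum.cong)

end

theorem mainTheorem3:
  fixes G :: "('a, 'b) monoid_scheme" and n :: nat and \<sigma> :: "nat \<Rightarrow> 'a"
    and a :: "(nat \<Rightarrow> nat) \<times> (nat \<Rightarrow> bool) \<Rightarrow> rat"
  assumes "group G" and "finite (carrier G)" and "n \<ge> 1"
    and "\<forall>i\<in>{1..n}. \<sigma> i \<in> carrier G"
  shows "(graded_star_identity G (poly_f n \<sigma> a) \<longleftrightarrow>
           (\<forall>\<beta>\<in>Wn n. graded_star_identity G
               (class_part G (act \<beta> (base_mon n \<sigma>)) (poly_f n \<sigma> a))))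
       \<and> (\<forall>\<beta>\<in>Wn n.
           graded_star_identity G (class_part G (act \<beta> (base_mon n \<sigma>)) (poly_f n \<sigma> a)) \<longleftrightarrow>
           (\<Sum>\<alpha>\<in>{\<alpha>\<in>Wn n. equivalent_mon G (act \<beta> (base_mon n \<sigma>)) (act \<alpha> (base_mon n \<sigma>))}. a \<alpha>) = 0)"
proof -
  interpret graded_multilinear G n \<sigma>
    using assms by (simp add: graded_multilinear_def graded_multilinear_axioms_def)
  have class_eq: "{\<alpha>\<in>Wn n. equivalent_mon G (orbit_mon \<beta>) (orbit_mon \<alpha>)} = {\<alpha>\<in>Wn n. path_key \<alpha> = path_key \<beta>}"
    if "\<beta> \<in> Wn n" for \<beta>
    using equivalent_orbit_mon_iff[OF _ that] by auto
  have part: "graded_star_identity G (class_part G (orbit_mon \<beta>) (poly_f n \<sigma> a)) \<longleftrightarrow> class_sum a \<beta> = 0"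
    if "\<beta> \<in> Wn n" for \<beta>
    using that by (auto simp: class_part_poly_f graded_star_identity_poly_f_iff_class_sums class_sum_restrict)
  show ?thesis
    using graded_star_identity_poly_f_iff_class_sums[of a] part class_eq by (simp add: class_sum_def)
qed

end
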